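(* There exists a mapping $\varrho$ on finite timed HT-traces $\mathbf{M}$ (preserving the length $\lambda\ge0$) such that for every metric formula $\varphi$ and every $k\in[0,\lambda)$: $\mathbf{M},k\models\varphi$ iff $\varrho(\mathbf{M}),\lambda-1-k\models\sigma(\varphi)$.
   Context: Metric formulas over $\mathcal{A}$: $\varphi ::= p \mid \bot \mid \varphi_1\otimes\varphi_2 \mid \bullet_I\varphi \mid \varphi_1\,\mathsf{S}_I\,\varphi_2 \mid \varphi_1\,\mathsf{T}_I\,\varphi_2 \mid \bigcirc_I\varphi \mid \varphi_1\,\mathsf{U}_I\,\varphi_2 \mid \varphi_1\,\mathsf{R}_I\,\varphi_2$, $\otimes\in\{\to,\wedge,\vee\}$, $I=[m,n)$, $m\in\mathbb{N}$, $n\in\mathbb{N}\cup\{\omega\}$. Derived: $\neg\varphi=\varphi\to\bot$, $\top=\neg\bot$, $\blacksquare_I\varphi=\bot\,\mathsf{T}_I\,\varphi$, eventually before $=\top\,\mathsf{S}_I\,\varphi$, $\widehat{\bullet}_I\varphi=\bullet_I\varphi\vee\neg\bullet_I\top$, $\Box_I\varphi=\bot\,\mathsf{R}_I\,\varphi$, $\Diamond_I\varphi=\top\,\mathsf{U}_I\,\varphi$, $\widehat{\bigcirc}_I\varphi=\bigcirc_I\varphi\vee\neg\bigcirc_I\top$. Timed HT-trace $\mathbf{M}=(\langle\mathbf{H},\mathbf{T}\rangle,\tau)$ of length $\lambda$: $H_i\subseteq T_i\subseteq\mathcal{A}$, $\tau:[0,\lambda)\to\mathbb{N}$, $\tau(0)=0$,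 $\tau(i)\le\tau(i+1)$. Satisfaction at $k$: $\bot$ never; $p$ iff $p\in H_k$; $\wedge,\vee$ usual; $\varphi\to\psi$ iff for both $\mathbf{M}'=\mathbf{M}$ and $\mathbf{M}'=(\langle\mathbf{T},\mathbf{T}\rangle,\tau)$, $\mathbf{M}',k\not\models\varphi$ or $\mathbf{M}',k\models\psi$; $\bullet_I\varphi$: $k>0$, $\varphi$ at $k-1$, $\tau(k)-\tau(k-1)\in I$; $\varphi\,\mathsf{S}_I\,\psi$: some $j\in[0,k]$ with $\tau(k)-\tau(j)\in I$, $\psi$ at $j$, $\varphi$ at all $i\in(j,k]$; $\varphi\,\mathsf{T}_I\,\psi$: for all such $j$, $\psi$ at $j$ or $\varphi$ at some $i\in(j,k]$; $\bigcirc_I\varphi$: $k+1<\lambda$, $\varphi$ at $k+1$, $\tau(k+1)-\tau(k)\in I$; $\varphi\,\mathsf{U}_I\,\psi$: some $j\in[k,\lambda)$ with $\tau(j)-\tau(k)\in I$, $\psi$ at $j$, $\varphi$ at all $i\in[k,j)$; $\varphi\,\mathsf{R}_I\,\psi$: for all such $j$, $\psi$ at $j$ or $\varphi$ at some $i\in[k,j)$. $\sigma(\varphi)$ replaces each connective by its swapped-time version: $\mathsf{U}_I/\mathsf{S}_I$, $\mathsf{R}_I/\mathsf{T}_I$, $\bigcirc_I/\bullet_I$, $\widehat{\bigcirc}_I/\widehat{\bullet}_I$, $\Box_I/\blacksquare_I$, $\Diamond_I$ / eventually before ($\top\,\mathsf{S}_I\,\cdot$). *)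

theory Defs
  imports Main "HOL-Library.Extended_Nat"
begin

text \<open>Intervals I = [m,n) with m natural and n natural or omega (encoded as enat infinity).\<close>
type_synonym intv = "nat \<times> enat"

definition in_intv :: "nat \<Rightarrow> intv \<Rightarrow> bool" where
  "in_intv d I \<longleftrightarrow> fst I \<le> d \<and> enat d < snd I"

datatype 'a mform =
    Atom 'a
  | Bot
  | Impl "'a mform" "'a mform"
  | Conj "'a mform" "'a mform"
  | Disj "'a mform" "'a mform"
  | Prev intv "'a mform"
  | Since intv "'a mform" "'a mform"
  | Trigger intv "'a mform" "'a mform"
  | Next intv "'a mform"
  | Until intv "'a mform" "'a mform"
  | Release intv "'a mform" "'a mform"

text \<open>Finite timed HT-trace of length len; only the positions i < len are meaningful.\<close>
record 'a tht =
  len :: nat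
  hs  :: "nat \<Rightarrow> 'a set"
  ts  :: "nat \<Rightarrow> 'a set"
  tau :: "nat \<Rightarrow> nat"

definition wf_tht :: "'a tht \<Rightarrow> bool" where
  "wf_tht M \<longleftrightarrow>
     (\<forall>i < len M. hs M i \<subseteq> ts M i) \<and>
     (0 < len M \<longrightarrow> tau M 0 = 0) \<and>
     (\<forall>i. i + 1 < len M \<longrightarrow> tau M i \<le> tau M (i + 1))"

definition total :: "'a tht \<Rightarrow> 'a tht" where
  "total M = M\<lparr>hs := ts M\<rparr>"

primrec sat :: "'a tht \<Rightarrow> nat \<Rightarrow> 'a mform \<Rightarrow> bool" where
  "sat M k (Atom p) \<longleftrightarrow> p \<in> hs M k"
| "sat M k Bot \<longleftrightarrow> False"
| "sat M k (Impl \<phi> \<psi>) \<longleftrightarrow>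
     (\<not> sat M k \<phi> \<or> sat M k \<psi>) \<and> (\<not> sat (total M) k \<phi> \<or> sat (total M) k \<psi>)"
| "sat M k (Conj \<phi> \<psi>) \<longleftrightarrow> sat M k \<phi> \<and> sat M k \<psi>"
| "sat M k (Disj \<phi> \<psi>) \<longleftrightarrow> sat M k \<phi> \<or> sat M k \<psi>"
| "sat M k (Prev I \<phi>) \<longleftrightarrow>
     0 < k \<and> sat M (k - 1) \<phi> \<and> in_intv (tau M k - tau M (k - 1)) I"
| "sat M k (Since I \<phi> \<psi>) \<longleftrightarrow>
     (\<exists>j \<le> k. in_intv (tau M k - tau M j) I \<and> sat M j \<psi> \<and>
        (\<forall>i. j < i \<and> i \<le> k \<longrightarrow> sat M i \<phi>))"
| "sat M k (Trigger I \<phi> \<psi>) \<longleftrightarrow>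
     (\<forall>j \<le> k. in_intv (tau M k - tau M j) I \<longrightarrow>
        sat M j \<psi> \<or> (\<exists>i. j < i \<and> i \<le> k \<and> sat M i \<phi>))"
| "sat M k (Next I \<phi>) \<longleftrightarrow>
     k + 1 < len M \<and> sat M (k + 1) \<phi> \<and> in_intv (tau M (k + 1) - tau M k) I"
| "sat M k (Until I \<phi> \<psi>) \<longleftrightarrow>
     (\<exists>j. k \<le> j \<and> j < len M \<and> in_intv (tau M j - tau M k) I \<and> sat M j \<psi> \<and>
        (\<forall>i. k \<le> i \<and> i < j \<longrightarrow> sat M i \<phi>))"
| "sat M k (Release I \<phi> \<psi>) \<longleftrightarrow>
     (\<forall>j. k \<le> j \<and> j < len M \<and> in_intv (tau M j - tau M k) I \<longrightarrow>
        sat M j \<psi> \<or> (\<exists>i. k \<le> i \<and> i < j \<and> sat M i \<phi>))"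

primrec swap :: "'a mform \<Rightarrow> 'a mform" where
  "swap (Atom p) = Atom p"
| "swap Bot = Bot"
| "swap (Impl \<phi> \<psi>) = Impl (swap \<phi>) (swap \<psi>)"
| "swap (Conj \<phi> \<psi>) = Conj (swap \<phi>) (swap \<psi>)"
| "swap (Disj \<phi> \<psi>) = Disj (swap \<phi>) (swap \<psi>)"
| "swap (Prev I \<phi>) = Next I (swap \<phi>)"
| "swap (Since I \<phi> \<psi>) = Until I (swap \<phi>) (swap \<psi>)"
| "swap (Trigger I \<phi> \<psi>) = Release I (swap \<phi>) (swap \<psi>)"
| "swap (Next I \<phi>) = Prev I (swap \<phi>)"
| "swap (Until I \<phi> \<psi>) = Since I (swap \<phi>) (swap \<psi>)"
| "swap (Release I \<phi> \<psi>) = Trigger I (swap \<phi>) (swap \<psi>)"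

end

theory Submission
  imports Defs
begin

text \<open>Read a trace backwards, measuring time down from its last timestamp. The reindexing
  \<open>i \<mapsto> \<lambda> - 1 - i\<close> reverses the order of positions and preserves all time distances
  \<open>\<tau>(j) - \<tau>(i)\<close>, so every future connective at \<open>k\<close> becomes the corresponding past connective
  at \<open>\<lambda> - 1 - k\<close> and vice versa. The induction over formulas is done for any pair of traces
  related in this way; since the relation is symmetric, each past/future pair needs only one
  reindexing argument, and on a fixed trace release and trigger are the classical duals of
  until and since. The here-and-there implication goes through because reversal commutes with
  passing to the total trace \<open>(T,T)\<close>.\<close>

definition mirror_timing :: "nat \<Rightarrow> (nat \<Rightarrow> nat) \<Rightarrow> (nat \<Rightarrow> nat) \<Rightarrow> bool" where
  "mirror_timing n \<tau> \<sigma> \<longleftrightarrow>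
     (\<forall>i j. i \<le> j \<longrightarrow> j < n \<longrightarrow> \<sigma> (n - 1 - i) - \<sigma> (n - 1 - j) = \<tau> j - \<tau> i)"

lemma mirror_timing_sym:
  assumes "mirror_timing n \<tau> \<sigma>"
  shows "mirror_timing n \<sigma> \<tau>"
  unfolding mirror_timing_def
proof (intro allI impI)
  fix i j assume "i \<le> j" "j < n"
  then have "\<sigma> j - \<sigma> i = \<tau> (n - 1 - i) - \<tau> (n - 1 - j)"
    using assms[unfolded mirror_timing_def, rule_format, of "n - 1 - j" "n - 1 - i"] by simp
  then show "\<tau> (n - 1 - i) - \<tau> (n - 1 - j) = \<sigma> j - \<sigma> i" by simp
qed

lemma until_iff_since_mirror:
  assumes \<sigma>: "mirror_timing n \<tau> \<sigma>" and "k < n"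
    and P: "\<And>i. i < n \<Longrightarrow> P i = P' (n - 1 - i)"
    and Q: "\<And>i. i < n \<Longrightarrow> Q i = Q' (n - 1 - i)"
  shows "(\<exists>j. k \<le> j \<and> j < n \<and> in_intv (\<tau> j - \<tau> k) I \<and> Q j \<and> (\<forall>i. k \<le> i \<and> i < j \<longrightarrow> P i))
     \<longleftrightarrow> (\<exists>j \<le> n - 1 - k. in_intv (\<sigma> (n - 1 - k) - \<sigma> j) I \<and> Q' j \<and>
           (\<forall>i. j < i \<and> i \<le> n - 1 - k \<longrightarrow> P' i))"
proof
  assume "\<exists>j. k \<le> j \<and> j < n \<and> in_intv (\<tau> j - \<tau> k) I \<and> Q j \<and> (\<forall>i. k \<le> i \<and> i < j \<longrightarrow> P i)"
  then obtain j where j: "k \<le> j" "j < n" "in_intv (\<tau> j - \<tau> k) I" "Q j" "\<forall>i. k \<le> i \<and> i < j \<longrightarrow> P i"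
    by blast
  have "P' i" if "n - 1 - j < i" "i \<le> n - 1 - k" for i
  proof -
    have "k \<le> n - 1 - i" "n - 1 - i < j" "n - 1 - i < n" "n - 1 - (n - 1 - i) = i"
      using that \<open>j < n\<close> by auto
    then show ?thesis using P[of "n - 1 - i"] j(5) by auto
  qed
  then show "\<exists>j \<le> n - 1 - k. in_intv (\<sigma> (n - 1 - k) - \<sigma> j) I \<and> Q' j \<and>
           (\<forall>i. j < i \<and> i \<le> n - 1 - k \<longrightarrow> P' i)"
    using j Q[of j] \<sigma>[unfolded mirror_timing_def] by (intro exI[of _ "n - 1 - j"]) auto
next
  assume "\<exists>j \<le> n - 1 - k. in_intv (\<sigma> (n - 1 - k) - \<sigma> j) I \<and> Q' j \<and>
           (\<forall>i. j < i \<and> i \<le> n - 1 - k \<longrightarrow> P' i)"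
  then obtain j where j: "j \<le> n - 1 - k" "in_intv (\<sigma> (n - 1 - k) - \<sigma> j) I" "Q' j"
      "\<forall>i. j < i \<and> i \<le> n - 1 - k \<longrightarrow> P' i"
    by blast
  have "P i" if "k \<le> i" "i < n - 1 - j" for i
  proof -
    have "i < n" "j < n - 1 - i" "n - 1 - i \<le> n - 1 - k"
      using that by auto
    then show ?thesis using P[of i] j(4) by auto
  qed
  then show "\<exists>j. k \<le> j \<and> j < n \<and> in_intv (\<tau> j - \<tau> k) I \<and> Q j \<and> (\<forall>i. k \<le> i \<and> i < j \<longrightarrow> P i)"
    using j Q[of "n - 1 - j"] \<sigma>[unfolded mirror_timing_def, rule_format, of k "n - 1 - j"] \<open>k < n\<close>
    by (intro exI[of _ "n - 1 - j"]) auto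
qed

lemma since_iff_until_mirror:
  assumes \<sigma>: "mirror_timing n \<tau> \<sigma>" and "k < n"
    and P: "\<And>i. i < n \<Longrightarrow> P i = P' (n - 1 - i)"
    and Q: "\<And>i. i < n \<Longrightarrow> Q i = Q' (n - 1 - i)"
  shows "(\<exists>j \<le> k. in_intv (\<tau> k - \<tau> j) I \<and> Q j \<and> (\<forall>i. j < i \<and> i \<le> k \<longrightarrow> P i))
     \<longleftrightarrow> (\<exists>j. n - 1 - k \<le> j \<and> j < n \<and> in_intv (\<sigma> j - \<sigma> (n - 1 - k)) I \<and> Q' j \<and>
           (\<forall>i. n - 1 - k \<le> i \<and> i < j \<longrightarrow> P' i))"
proof -
  have "P' i = P (n - 1 - i)" "Q' i = Q (n - 1 - i)" if "i < n" for i
    using that P[of "n - 1 - i"] Q[of "n - 1 - i"] by auto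
  from until_iff_since_mirror[OF mirror_timing_sym[OF \<sigma>],
      where P = P' and P' = P and Q = Q' and Q' = Q] this
  show ?thesis using \<open>k < n\<close> by (simp add: eq_commute)
qed

lemma next_iff_prev_mirror:
  assumes \<sigma>: "mirror_timing n \<tau> \<sigma>" and "k < n"
    and P: "\<And>i. i < n \<Longrightarrow> P i = P' (n - 1 - i)"
  shows "(k + 1 < n \<and> P (k + 1) \<and> in_intv (\<tau> (k + 1) - \<tau> k) I)
     \<longleftrightarrow> (0 < n - 1 - k \<and> P' (n - 1 - k - 1) \<and> in_intv (\<sigma> (n - 1 - k) - \<sigma> (n - 1 - k - 1)) I)"
proof (cases "k + 1 < n")
  case True
  then have "n - 1 - k - 1 = n - 1 - (k + 1)" by simp
  then show ?thesis
    using True P[of "k + 1"] \<sigma>[unfolded mirror_timing_def, rule_format, of k "k + 1"] by simp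
qed auto

lemma prev_iff_next_mirror:
  assumes \<sigma>: "mirror_timing n \<tau> \<sigma>" and "k < n"
    and P: "\<And>i. i < n \<Longrightarrow> P i = P' (n - 1 - i)"
  shows "(0 < k \<and> P (k - 1) \<and> in_intv (\<tau> k - \<tau> (k - 1)) I)
     \<longleftrightarrow> (n - 1 - k + 1 < n \<and> P' (n - 1 - k + 1) \<and> in_intv (\<sigma> (n - 1 - k + 1) - \<sigma> (n - 1 - k)) I)"
proof -
  have "P' i = P (n - 1 - i)" if "i < n" for i
    using that P[of "n - 1 - i"] by auto
  from next_iff_prev_mirror[OF mirror_timing_sym[OF \<sigma>],
      where P = P' and P' = P and k = "n - 1 - k"] this
  show ?thesis using \<open>k < n\<close> by (simp add: eq_commute conj_commute)
qed

lemma release_iff_trigger_mirror: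
  assumes \<sigma>: "mirror_timing n \<tau> \<sigma>" and "k < n"
    and P: "\<And>i. i < n \<Longrightarrow> P i = P' (n - 1 - i)"
    and Q: "\<And>i. i < n \<Longrightarrow> Q i = Q' (n - 1 - i)"
  shows "(\<forall>j. k \<le> j \<and> j < n \<and> in_intv (\<tau> j - \<tau> k) I \<longrightarrow> Q j \<or> (\<exists>i. k \<le> i \<and> i < j \<and> P i))
     \<longleftrightarrow> (\<forall>j \<le> n - 1 - k. in_intv (\<sigma> (n - 1 - k) - \<sigma> j) I \<longrightarrow> Q' j \<or>
           (\<exists>i. j < i \<and> i \<le> n - 1 - k \<and> P' i))"
proof -
  have "(\<exists>j. k \<le> j \<and> j < n \<and> in_intv (\<tau> j - \<tau> k) I \<and> \<not> Q j \<and> (\<forall>i. k \<le> i \<and> i < j \<longrightarrow> \<not> P i))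
     \<longleftrightarrow> (\<exists>j \<le> n - 1 - k. in_intv (\<sigma> (n - 1 - k) - \<sigma> j) I \<and> \<not> Q' j \<and>
           (\<forall>i. j < i \<and> i \<le> n - 1 - k \<longrightarrow> \<not> P' i))"
    by (rule until_iff_since_mirror[OF \<sigma> \<open>k < n\<close>]) (simp_all add: P Q)
  then show ?thesis by blast
qed

lemma trigger_iff_release_mirror:
  assumes \<sigma>: "mirror_timing n \<tau> \<sigma>" and "k < n"
    and P: "\<And>i. i < n \<Longrightarrow> P i = P' (n - 1 - i)"
    and Q: "\<And>i. i < n \<Longrightarrow> Q i = Q' (n - 1 - i)"
  shows "(\<forall>j \<le> k. in_intv (\<tau> k - \<tau> j) I \<longrightarrow> Q j \<or> (\<exists>i. j < i \<and> i \<le> k \<and> P i))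
     \<longleftrightarrow> (\<forall>j. n - 1 - k \<le> j \<and> j < n \<and> in_intv (\<sigma> j - \<sigma> (n - 1 - k)) I \<longrightarrow> Q' j \<or>
           (\<exists>i. n - 1 - k \<le> i \<and> i < j \<and> P' i))"
proof -
  have "(\<exists>j \<le> k. in_intv (\<tau> k - \<tau> j) I \<and> \<not> Q j \<and> (\<forall>i. j < i \<and> i \<le> k \<longrightarrow> \<not> P i))
     \<longleftrightarrow> (\<exists>j. n - 1 - k \<le> j \<and> j < n \<and> in_intv (\<sigma> j - \<sigma> (n - 1 - k)) I \<and> \<not> Q' j \<and>
           (\<forall>i. n - 1 - k \<le> i \<and> i < j \<longrightarrow> \<not> P' i))"
    by (rule since_iff_until_mirror[OF \<sigma> \<open>k < n\<close>]) (simp_all add: P Q)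
  then show ?thesis by blast
qed

definition mirrored :: "'a tht \<Rightarrow> 'a tht \<Rightarrow> bool" where
  "mirrored M N \<longleftrightarrow> len N = len M \<and>
     (\<forall>i < len M. hs N (len M - 1 - i) = hs M i \<and> ts N (len M - 1 - i) = ts M i) \<and>
     mirror_timing (len M) (tau M) (tau N)"

lemma mirrored_total: "mirrored M N \<Longrightarrow> mirrored (total M) (total N)"
  by (simp add: mirrored_def total_def)

lemma sat_swap_mirrored:
  assumes "mirrored M N" and "k < len M"
  shows "sat M k \<phi> \<longleftrightarrow> sat N (len M - 1 - k) (swap \<phi>)"
  using assms
proof (induction \<phi> arbitrary: M N k)
  case (Atom p)
  then show ?case by (simp add: mirrored_def)
next
  case (Impl \<phi> \<psi>)
  then show ?case using mirrored_total[OF Impl.prems(1)] by (simp add: total_def)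
next
  case (Prev I \<phi>)
  then have "mirror_timing (len M) (tau M) (tau N)" "len N = len M"
    by (simp_all add: mirrored_def)
  then show ?case
    using prev_iff_next_mirror[where P = "\<lambda>i. sat M i \<phi>" and P' = "\<lambda>i. sat N i (swap \<phi>)",
      OF _ Prev.prems(2) Prev.IH[OF Prev.prems(1)]] by simp
next
  case (Next I \<phi>)
  then have "mirror_timing (len M) (tau M) (tau N)" "len N = len M"
    by (simp_all add: mirrored_def)
  then show ?case
    using next_iff_prev_mirror[where P = "\<lambda>i. sat M i \<phi>" and P' = "\<lambda>i. sat N i (swap \<phi>)",
      OF _ Next.prems(2) Next.IH[OF Next.prems(1)]] by simp
next
  case (Since I \<phi> \<psi>)
  then have "mirror_timing (len M) (tau M) (tau N)" "len N = len M"
    by (simp_all add: mirrored_def)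
  then show ?case
    using since_iff_until_mirror[where P = "\<lambda>i. sat M i \<phi>" and P' = "\<lambda>i. sat N i (swap \<phi>)"
      and Q = "\<lambda>i. sat M i \<psi>" and Q' = "\<lambda>i. sat N i (swap \<psi>)",
      OF _ Since.prems(2) Since.IH[OF Since.prems(1)]] by simp
next
  case (Until I \<phi> \<psi>)
  then have "mirror_timing (len M) (tau M) (tau N)" "len N = len M"
    by (simp_all add: mirrored_def)
  then show ?case
    using until_iff_since_mirror[where P = "\<lambda>i. sat M i \<phi>" and P' = "\<lambda>i. sat N i (swap \<phi>)"
      and Q = "\<lambda>i. sat M i \<psi>" and Q' = "\<lambda>i. sat N i (swap \<psi>)",
      OF _ Until.prems(2) Until.IH[OF Until.prems(1)]] by simp
next
  case (Trigger I \<phi> \<psi>)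
  then have "mirror_timing (len M) (tau M) (tau N)" "len N = len M"
    by (simp_all add: mirrored_def)
  then show ?case
    using trigger_iff_release_mirror[where P = "\<lambda>i. sat M i \<phi>" and P' = "\<lambda>i. sat N i (swap \<phi>)"
      and Q = "\<lambda>i. sat M i \<psi>" and Q' = "\<lambda>i. sat N i (swap \<psi>)",
      OF _ Trigger.prems(2) Trigger.IH[OF Trigger.prems(1)]] by simp
next
  case (Release I \<phi> \<psi>)
  then have "mirror_timing (len M) (tau M) (tau N)" "len N = len M"
    by (simp_all add: mirrored_def)
  then show ?case
    using release_iff_trigger_mirror[where P = "\<lambda>i. sat M i \<phi>" and P' = "\<lambda>i. sat N i (swap \<phi>)"
      and Q = "\<lambda>i. sat M i \<psi>" and Q' = "\<lambda>i. sat N i (swap \<psi>)",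
      OF _ Release.prems(2) Release.IH[OF Release.prems(1)]] by simp
qed simp_all

lemma wf_tht_tau_mono:
  assumes "wf_tht M" and "i \<le> j" and "j < len M"
  shows "tau M i \<le> tau M j"
  by (rule lift_Suc_mono_le_ivl[where N = "{..<len M - 1}"])
    (use assms in \<open>auto simp: wf_tht_def\<close>)

text \<open>Timestamps are measured back from the last one, so the reversed trace starts at time 0.\<close>
definition reverse_tht :: "'a tht \<Rightarrow> 'a tht" where
  "reverse_tht M = M\<lparr>hs := \<lambda>i. hs M (len M - 1 - i), ts := \<lambda>i. ts M (len M - 1 - i),
     tau := \<lambda>i. tau M (len M - 1) - tau M (len M - 1 - i)\<rparr>"

lemma len_reverse_tht [simp]: "len (reverse_tht M) = len M"
  by (simp add: reverse_tht_def)

lemma wf_tht_reverse_tht: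
  assumes "wf_tht M"
  shows "wf_tht (reverse_tht M)"
proof -
  have "tau M (len M - 1 - (i + 1)) \<le> tau M (len M - 1 - i)" if "i + 1 < len M" for i
    using wf_tht_tau_mono[OF assms, of "len M - 1 - (i + 1)" "len M - 1 - i"] that by simp
  then show ?thesis
    using assms by (auto simp: wf_tht_def reverse_tht_def intro: diff_le_mono2)
qed

lemma mirrored_reverse_tht:
  assumes "wf_tht M"
  shows "mirrored M (reverse_tht M)"
  unfolding mirrored_def mirror_timing_def
proof (intro conjI allI impI)
  fix i j assume "i \<le> j" "j < len M"
  then have "tau M i \<le> tau M j" "tau M j \<le> tau M (len M - 1)"
    using wf_tht_tau_mono[OF assms] by auto
  with \<open>i \<le> j\<close> \<open>j < len M\<close>
  show "tau (reverse_tht M) (len M - 1 - i) - tau (reverse_tht M) (len M - 1 - j) = tau M j - tau M i"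
    by (simp add: reverse_tht_def)
qed (simp_all add: reverse_tht_def)

theorem lemma1:
  shows "\<exists>\<rho> :: 'a tht \<Rightarrow> 'a tht. \<forall>M. wf_tht M \<longrightarrow>
           wf_tht (\<rho> M) \<and> len (\<rho> M) = len M \<and>
           (\<forall>\<phi> k. k < len M \<longrightarrow>
              (sat M k \<phi> \<longleftrightarrow> sat (\<rho> M) (len M - 1 - k) (swap \<phi>)))"
  by (rule exI[of _ reverse_tht])
    (auto simp: wf_tht_reverse_tht sat_swap_mirrored[OF mirrored_reverse_tht])

end
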